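(* Let $d\ge1$, $\sigma>0$ with $1<\sigma d<2$, and $a>0$. Then there is no nontrivial solution $Q$ of $$Q''+\frac{d-1}{\rho}Q'-Q+ia\left(\frac{1}{\sigma}Q+\rho Q'\right)+|Q|^{2\sigma}Q=0,\ \ 0<\rho<\infty,\qquad Q'(0)=0,$$ such that $Q(\rho)\sim c_1\rho^{-i/a-1/\sigma}$ as $\rho\to\infty$ for some $c_1\in\mathbb{C}$ (i.e., in the large-$\rho$ asymptotic decomposition $Q\sim c_1Q_1+c_2Q_2$ with $Q_1\sim\rho^{-i/a-1/\sigma}$ and $Q_2\sim e^{-ia\rho^2/2}\rho^{i/a-d+1/\sigma}$, one always has $c_2\neq0$). *)

theory Defs
  imports "HOL-Analysis.Analysis"
begin

end

theory Submission
  imports Defs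
begin

text \<open>
  Write \<open>j = Im (cnj Q * Q')\<close> and \<open>m = \<bar>Q\<bar>^2\<close>. The imaginary part of \<open>cnj Q\<close> times the
  equation shows that \<open>\<rho>^(d-1) j + (a/2) \<rho>^d m\<close> has derivative
  \<open>-a (1/\<sigma> - d/2) \<rho>^(d-1) m \<le> 0\<close>; this is where \<open>\<sigma> d < 2\<close> enters. The functional vanishes
  at \<open>\<rho> = 0\<close>, so for nontrivial \<open>Q\<close> it is eventually below some \<open>-L < 0\<close>, and then so is
  \<open>\<rho>^(d-1) j\<close>.

  The assumed asymptotics give \<open>m = O(\<rho>^(-2/\<sigma>))\<close>, hence \<open>\<rho>^d m \<rightarrow> 0\<close>. The real part of
  \<open>cnj Q\<close> times the equation gives the derivative of \<open>\<rho>^(d-1) Re (cnj Q * Q')\<close>, and by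
  Cauchy-Schwarz \<open>(\<rho>^(d-1) j)^2 \<le> \<rho>^(d-1) \<bar>Q'\<bar>^2 \<cdot> \<rho>^(d-1) m\<close>; together with the two bounds
  above the kinetic term \<open>\<rho>^(d-1) \<bar>Q'\<bar>^2\<close> dominates and the derivative is eventually at least
  \<open>a L\<close>. So \<open>Re (cnj Q * Q') = m'/2\<close> is eventually positive and \<open>m\<close> eventually increases,
  contradicting \<open>m \<rightarrow> 0\<close> and \<open>m \<noteq> 0\<close>.
\<close>

lemma norm_le_of_powr_asymptotics:
  fixes Q :: "real \<Rightarrow> complex" and c z :: complex and \<alpha> :: real
  assumes Re_z: "Re z = - \<alpha>"
    and lim: "((\<lambda>\<rho>. \<rho> powr \<alpha> *\<^sub>R (Q \<rho> - c * complex_of_real \<rho> powr z)) \<longlongrightarrow> 0) at_top"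
  shows "\<forall>\<^sub>F \<rho> in at_top. cmod (Q \<rho>) \<le> (cmod c + 1) * \<rho> powr (- \<alpha>)"
  using tendstoD[OF lim zero_less_one] eventually_gt_at_top[of 0]
proof eventually_elim
  case (elim \<rho>)
  have "\<rho> powr \<alpha> * cmod (Q \<rho> - c * complex_of_real \<rho> powr z) < 1"
    using elim by (simp add: dist_norm)
  then have err: "cmod (Q \<rho> - c * complex_of_real \<rho> powr z) < \<rho> powr (- \<alpha>)"
    using elim(2) by (simp add: powr_minus field_simps)
  have "cmod (Q \<rho>) \<le> cmod (Q \<rho> - c * complex_of_real \<rho> powr z) + cmod (c * complex_of_real \<rho> powr z)"
    by (metis diff_add_cancel norm_triangle_ineq)
  also have "\<dots> \<le> \<rho> powr (- \<alpha>) + cmod c * \<rho> powr (- \<alpha>)"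
    using err elim(2) by (simp add: norm_mult norm_powr_real_powr Re_z)
  finally show ?case by (simp add: algebra_simps)
qed

lemma DERIV_nonpos_imp_le_at_right_limit:
  fixes H :: "real \<Rightarrow> real"
  assumes lim: "(H \<longlongrightarrow> L) (at_right a)"
    and deriv: "\<And>x. x > a \<Longrightarrow> \<exists>y. (H has_real_derivative y) (at x) \<and> y \<le> 0"
    and "t > a"
  shows "H t \<le> L"
proof (rule tendsto_lowerbound[OF lim])
  show "\<forall>\<^sub>F s in at_right a. H t \<le> H s"
    using eventually_at_right_real[OF \<open>t > a\<close>]
  proof eventually_elim
    case (elim s)
    show "H t \<le> H s"
      by (rule DERIV_nonpos_imp_nonincreasing) (use elim deriv in auto)
  qed
qed simp

lemma DERIV_nonneg_imp_le_at_top_limit: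
  fixes f :: "real \<Rightarrow> real"
  assumes lim: "(f \<longlongrightarrow> L) at_top"
    and deriv: "\<And>x. x \<ge> T \<Longrightarrow> \<exists>y. (f has_real_derivative y) (at x) \<and> y \<ge> 0"
    and "t \<ge> T"
  shows "f t \<le> L"
proof (rule tendsto_lowerbound[OF lim])
  show "\<forall>\<^sub>F s in at_top. f t \<le> f s"
    using eventually_ge_at_top[of t]
  proof eventually_elim
    case (elim s)
    show "f t \<le> f s"
      by (rule DERIV_nonneg_imp_nondecreasing) (use elim deriv \<open>t \<ge> T\<close> in auto)
  qed
qed simp

lemma DERIV_ge_pos_imp_eventually_pos:
  fixes G :: "real \<Rightarrow> real"
  assumes deriv: "\<And>x. x \<ge> T \<Longrightarrow> \<exists>y. (G has_real_derivative y) (at x) \<and> y \<ge> K"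
    and "K > 0"
  shows "\<forall>\<^sub>F x in at_top. G x > 0"
proof -
  have growth: "G T + K * (x - T) \<le> G x" if "x \<ge> T" for x
  proof -
    have "G T - K * T \<le> G x - K * x"
    proof (rule DERIV_nonneg_imp_nondecreasing[where f = "\<lambda>x. G x - K * x", OF that])
      fix s assume "T \<le> s"
      then obtain y where y: "(G has_real_derivative y) (at s)" "y \<ge> K" using deriv by blast
      then show "\<exists>y. ((\<lambda>x. G x - K * x) has_real_derivative y) (at s) \<and> y \<ge> 0"
        using DERIV_diff[OF y(1) DERIV_cmult_Id[of K]] by (intro exI[of _ "y - K"]) auto
    qed
    then show ?thesis by (simp add: algebra_simps)
  qed
  show ?thesis
    using eventually_gt_at_top[of "T + \<bar>G T\<bar> / K"]
  proof eventually_elim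
    case (elim x)
    then have "\<bar>G T\<bar> < K * (x - T)" using \<open>K > 0\<close> by (simp add: field_simps)
    then show ?case using growth[of x] elim \<open>K > 0\<close> by (smt (verit) divide_nonneg_pos)
  qed
qed

lemma flux_growth_inequality:
  fixes P f p j m \<rho> a L :: real
  assumes "P > 0" "p \<ge> 0" "j\<^sup>2 \<le> f * p" "P * j \<le> - L" "L > 0"
    and "2 * a * \<rho> * (P * f) \<le> L" "m \<le> 1" "\<rho> \<ge> 1" "a > 0"
  shows "a * L \<le> P * (p + f - m * f) + a * \<rho> * (P * j)"
proof -
  define u where "u = - (P * j)"
  have "u \<ge> L" using assms(4) by (simp add: u_def)
  have "f > 0"
  proof (rule ccontr)
    assume "\<not> f > 0"
    then have "f * p \<le> 0" using assms(2) by (simp add: mult_nonpos_nonneg)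
    then have "j\<^sup>2 \<le> 0" using assms(3) by linarith
    then have "j = 0" by simp
    then show False using assms(4,5) by simp
  qed
  have "u * L \<le> u\<^sup>2"
    using \<open>u \<ge> L\<close> \<open>L > 0\<close> by (simp add: power2_eq_square mult_left_mono)
  also have "\<dots> = P\<^sup>2 * j\<^sup>2" by (simp add: u_def power_mult_distrib)
  also have "\<dots> \<le> P\<^sup>2 * (f * p)" using assms(3) by (simp add: mult_left_mono)
  finally have uL: "u * L \<le> (P * p) * (P * f)" by (simp add: power2_eq_square ac_simps)
  have "(2 * a * \<rho> * u) * (P * f) = u * (2 * a * \<rho> * (P * f))" by (simp add: ac_simps)
  also have "\<dots> \<le> u * L"
    using assms(6) \<open>u \<ge> L\<close> \<open>L > 0\<close> by (simp add: mult_left_mono)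
  finally have "(2 * a * \<rho> * u) * (P * f) \<le> (P * p) * (P * f)" using uL by linarith
  then have kinetic: "2 * a * \<rho> * u \<le> P * p"
    by (rule mult_right_le_imp_le) (use \<open>P > 0\<close> \<open>f > 0\<close> in simp)
  have "L \<le> \<rho> * u"
    using \<open>u \<ge> L\<close> assms(5,8) mult_mono[of 1 \<rho> L u] by simp
  then have flux: "a * L \<le> a * \<rho> * u"
    using assms(9) by (simp add: mult.assoc)
  have "0 \<le> (1 - m) * f" using assms(7) \<open>f > 0\<close> by simp
  then have mass: "0 \<le> P * (f - m * f)"
    using \<open>P > 0\<close> by (simp add: algebra_simps)
  show ?thesis using kinetic flux mass by (simp add: u_def algebra_simps)
qed

lemma exists_pos_nonzero_of_tendsto_at_right_0:
  fixes Q :: "real \<Rightarrow> 'a::real_normed_vector"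
  assumes "r \<ge> 0" "Q r \<noteq> 0" and lim: "(Q \<longlongrightarrow> Q 0) (at_right 0)"
  shows "\<exists>s > 0. Q s \<noteq> 0"
proof (cases "r = 0")
  case True
  then have "\<forall>\<^sub>F s in at_right 0. Q s \<noteq> 0"
    using assms(2) by (intro tendsto_imp_eventually_ne[OF lim]) simp
  moreover have "\<forall>\<^sub>F s in at_right 0. s > (0::real)"
    by (simp add: eventually_at_right_less)
  ultimately have "\<forall>\<^sub>F s in at_right 0. s > 0 \<and> Q s \<noteq> 0"
    by eventually_elim simp
  then show ?thesis
    using eventually_happens'[of "at_right (0::real)"] by auto
next
  case False
  then show ?thesis using assms by (intro exI[of _ r]) auto
qed

lemma Re_cnj_mult_self: "Re (cnj z * z) = (cmod z)\<^sup>2"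
  by (metis complex_norm_square mult.commute Re_complex_of_real)

locale radial_profile_ode =
  fixes d \<sigma> a :: real and Q Q' Q'' :: "real \<Rightarrow> complex"
  assumes Q_deriv: "\<And>r. r > 0 \<Longrightarrow> (Q has_vector_derivative Q' r) (at r)"
    and Q'_deriv: "\<And>r. r > 0 \<Longrightarrow> (Q' has_vector_derivative Q'' r) (at r)"
    and ode: "\<And>r. r > 0 \<Longrightarrow>
        Q'' r + of_real ((d - 1) / r) * Q' r - Q r
        + \<i> * of_real a * (of_real (1 / \<sigma>) * Q r + of_real r * Q' r)
        + of_real (cmod (Q r) powr (2 * \<sigma>)) * Q r = 0"
begin

definition current :: "real \<Rightarrow> real" where
  "current t = Im (cnj (Q t) * Q' t)"

definition mass_flux :: "real \<Rightarrow> real" where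
  "mass_flux t = Re (cnj (Q t) * Q' t)"

definition current_functional :: "real \<Rightarrow> real" where
  "current_functional t = t powr (d - 1) * current t + a / 2 * (t powr d * (cmod (Q t))\<^sup>2)"

definition flux_functional :: "real \<Rightarrow> real" where
  "flux_functional t = t powr (d - 1) * mass_flux t"

lemma Q''_eq:
  assumes "r > 0"
  shows "Q'' r = - (of_real ((d - 1) / r) * Q' r) + Q r
    - \<i> * of_real a * (of_real (1 / \<sigma>) * Q r + of_real r * Q' r)
    - of_real (cmod (Q r) powr (2 * \<sigma>)) * Q r"
  using ode[OF assms] by (simp add: algebra_simps eq_neg_iff_add_eq_0 [symmetric])

lemma Im_cnj_Q_Q'':
  assumes "r > 0"
  shows "Im (cnj (Q r) * Q'' r)
    = - ((d - 1) / r) * current r - a * ((cmod (Q r))\<^sup>2 / \<sigma> + r * mass_flux r)"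
proof -
  have "Im (cnj (Q r) * Q'' r)
    = - ((d - 1) / r) * current r - a * (Re (cnj (Q r) * Q r) / \<sigma> + r * mass_flux r)"
    unfolding Q''_eq[OF assms] current_def mass_flux_def
    by (simp add: algebra_simps)
      (simp add: add_divide_distrib [symmetric] diff_divide_distrib [symmetric] algebra_simps)
  then show ?thesis by (simp only: Re_cnj_mult_self)
qed

lemma Re_cnj_Q_Q'':
  assumes "r > 0"
  shows "Re (cnj (Q r) * Q'' r) = - ((d - 1) / r) * mass_flux r + (cmod (Q r))\<^sup>2
    + a * r * current r - cmod (Q r) powr (2 * \<sigma>) * (cmod (Q r))\<^sup>2"
proof -
  have "Re (cnj (Q r) * Q'' r) = - ((d - 1) / r) * mass_flux r + Re (cnj (Q r) * Q r)
    + a * r * current r - cmod (Q r) powr (2 * \<sigma>) * Re (cnj (Q r) * Q r)"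
    unfolding Q''_eq[OF assms] current_def mass_flux_def
    by (simp add: algebra_simps)
      (simp add: add_divide_distrib [symmetric] diff_divide_distrib [symmetric] algebra_simps)
  then show ?thesis by (simp only: Re_cnj_mult_self)
qed

lemma
  assumes "r > 0"
  shows mass_deriv: "((\<lambda>t. (cmod (Q t))\<^sup>2) has_real_derivative 2 * mass_flux r) (at r)"
    and current_deriv: "(current has_real_derivative Im (cnj (Q r) * Q'' r)) (at r)"
    and mass_flux_deriv:
      "(mass_flux has_real_derivative (cmod (Q' r))\<^sup>2 + Re (cnj (Q r) * Q'' r)) (at r)"
proof -
  have "((\<lambda>t. cnj (Q t) * Q t) has_vector_derivative cnj (Q r) * Q' r + cnj (Q' r) * Q r) (at r)"
    using Q_deriv[OF assms] by (intro derivative_intros)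
  moreover have "(\<lambda>t. (cmod (Q t))\<^sup>2) = (\<lambda>t. Re (cnj (Q t) * Q t))"
    by (simp only: Re_cnj_mult_self)
  ultimately show "((\<lambda>t. (cmod (Q t))\<^sup>2) has_real_derivative 2 * mass_flux r) (at r)"
    unfolding has_vector_derivative_complex_iff mass_flux_def by (simp add: algebra_simps)
  have prod: "((\<lambda>t. cnj (Q t) * Q' t) has_vector_derivative
      cnj (Q r) * Q'' r + cnj (Q' r) * Q' r) (at r)"
    using Q_deriv[OF assms] Q'_deriv[OF assms] by (intro derivative_intros)
  then show "(current has_real_derivative Im (cnj (Q r) * Q'' r)) (at r)"
    unfolding has_vector_derivative_complex_iff current_def[abs_def] by simp
  have "Re (cnj (Q' r) * Q' r) = (cmod (Q' r))\<^sup>2"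
    by (simp only: Re_cnj_mult_self)
  with prod show "(mass_flux has_real_derivative (cmod (Q' r))\<^sup>2 + Re (cnj (Q r) * Q'' r)) (at r)"
    unfolding has_vector_derivative_complex_iff mass_flux_def[abs_def]
    by (simp add: add.commute)
qed

lemma current_functional_deriv:
  assumes "r > 0"
  shows "(current_functional has_real_derivative
      - a * (1 / \<sigma> - d / 2) * (r powr (d - 1) * (cmod (Q r))\<^sup>2)) (at r)"
proof -
  have D: "(current_functional has_real_derivative
      (d - 1) * r powr (d - 1 - 1) * current r + Im (cnj (Q r) * Q'' r) * r powr (d - 1)
      + a / 2 * (d * r powr (d - 1) * (cmod (Q r))\<^sup>2 + 2 * mass_flux r * r powr d)) (at r)"
    unfolding current_functional_def[abs_def] using assms
    by (intro DERIV_add DERIV_cmult DERIV_mult has_real_derivative_powr current_deriv mass_deriv)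
  have powr_d_minus_2: "r powr (d - 1 - 1) = r powr (d - 1) / r"
    using assms by (simp add: powr_diff power2_eq_square)
  have powr_d: "r powr d = r * r powr (d - 1)"
    using assms by (simp add: powr_mult_base)
  show ?thesis
    by (rule DERIV_cong[OF D])
      (unfold Im_cnj_Q_Q''[OF assms] powr_d_minus_2 powr_d, use assms in \<open>simp add: field_simps\<close>)
qed

lemma flux_functional_deriv:
  assumes "r > 0"
  shows "(flux_functional has_real_derivative
      r powr (d - 1) * ((cmod (Q' r))\<^sup>2 + (cmod (Q r))\<^sup>2 - cmod (Q r) powr (2 * \<sigma>) * (cmod (Q r))\<^sup>2)
      + a * r * (r powr (d - 1) * current r)) (at r)"
proof -
  have D: "(flux_functional has_real_derivative
      (d - 1) * r powr (d - 1 - 1) * mass_flux r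
      + ((cmod (Q' r))\<^sup>2 + Re (cnj (Q r) * Q'' r)) * r powr (d - 1)) (at r)"
    unfolding flux_functional_def[abs_def] using assms
    by (intro DERIV_mult has_real_derivative_powr mass_flux_deriv)
  have "r powr (d - 1 - 1) = r powr (d - 1) / r"
    using assms by (simp add: powr_diff power2_eq_square)
  then show ?thesis
    by (intro DERIV_cong[OF D]) (unfold Re_cnj_Q_Q''[OF assms], simp add: algebra_simps)
qed

lemma current_sq_le: "(current t)\<^sup>2 \<le> (cmod (Q t))\<^sup>2 * (cmod (Q' t))\<^sup>2"
proof -
  have "\<bar>current t\<bar> \<le> cmod (Q t) * cmod (Q' t)"
    using abs_Im_le_cmod[of "cnj (Q t) * Q' t"] by (simp add: current_def norm_mult)
  then show ?thesis
    by (metis abs_ge_zero power2_abs power_mono power_mult_distrib)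
qed

lemma current_functional_tendsto_0:
  assumes "d \<ge> 1" and Q_0: "(Q \<longlongrightarrow> Q 0) (at_right 0)" and Q'_0: "(Q' \<longlongrightarrow> 0) (at_right 0)"
  shows "(current_functional \<longlongrightarrow> 0) (at_right 0)"
proof -
  have near_0: "\<forall>\<^sub>F t in at_right 0. t \<in> {0<..<(1::real)}"
    by (rule eventually_at_right_real) simp
  have "(current \<longlongrightarrow> Im (cnj (Q 0) * 0)) (at_right 0)"
    unfolding current_def[abs_def] by (intro tendsto_intros Q_0 Q'_0)
  then have current_0: "(current \<longlongrightarrow> 0) (at_right 0)" by simp
  have weighted_current: "((\<lambda>t. t powr (d - 1) * current t) \<longlongrightarrow> 0) (at_right 0)"
  proof (rule Lim_null_comparison)
    show "\<forall>\<^sub>F t in at_right 0. norm (t powr (d - 1) * current t) \<le> \<bar>current t\<bar>"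
      using near_0
    proof eventually_elim
      case (elim t)
      then have "t powr (d - 1) \<le> 1" using assms(1) by (intro powr_le1) auto
      then show ?case using elim by (simp add: abs_mult mult_left_le_one_le)
    qed
    show "((\<lambda>t. \<bar>current t\<bar>) \<longlongrightarrow> 0) (at_right 0)"
      using tendsto_rabs[OF current_0] by simp
  qed
  have weighted_mass: "((\<lambda>t. t powr d * (cmod (Q t))\<^sup>2) \<longlongrightarrow> 0) (at_right 0)"
  proof (rule Lim_null_comparison)
    show "\<forall>\<^sub>F t in at_right 0. norm (t powr d * (cmod (Q t))\<^sup>2) \<le> t * (cmod (Q t))\<^sup>2"
      using near_0
    proof eventually_elim
      case (elim t)
      then have "t powr d \<le> t" using assms(1) by (intro powr_le_one_le) auto
      then show ?case using elim by (simp add: mult_right_mono)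
    qed
    have "((\<lambda>t. t * (cmod (Q t))\<^sup>2) \<longlongrightarrow> 0 * (cmod (Q 0))\<^sup>2) (at_right 0)"
      by (intro tendsto_intros Q_0)
    then show "((\<lambda>t. t * (cmod (Q t))\<^sup>2) \<longlongrightarrow> 0) (at_right 0)" by simp
  qed
  have "(current_functional \<longlongrightarrow> 0 + a / 2 * 0) (at_right 0)"
    unfolding current_functional_def[abs_def] by (intro tendsto_intros weighted_current weighted_mass)
  then show ?thesis by simp
qed

lemma weighted_current_eventually_negative:
  assumes "\<sigma> > 0" "\<sigma> * d < 2" "a > 0"
    and lim_0: "(current_functional \<longlongrightarrow> 0) (at_right 0)" and "r > 0" "Q r \<noteq> 0"
  obtains L R where "L > 0" "\<And>t. t \<ge> R \<Longrightarrow> t powr (d - 1) * current t \<le> - L"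
proof -
  define D where "D x = a * (1 / \<sigma> - d / 2) * (x powr (d - 1) * (cmod (Q x))\<^sup>2)" for x
  have gap: "0 < 1 / \<sigma> - d / 2" using assms(1,2) by (simp add: field_simps)
  have deriv: "(current_functional has_real_derivative - D x) (at x)" if "x > 0" for x
    using current_functional_deriv[OF that] by (simp add: D_def)
  have nonincreasing: "\<exists>y. (current_functional has_real_derivative y) (at x) \<and> y \<le> 0"
    if "x > 0" for x
  proof (intro exI conjI)
    show "(current_functional has_real_derivative - D x) (at x)" using deriv[OF that] .
    have "0 \<le> D x"
      unfolding D_def using gap \<open>a > 0\<close> by (intro mult_nonneg_nonneg) auto
    then show "- D x \<le> 0" by simp
  qed
  have "current_functional r \<le> 0"
    by (rule DERIV_nonpos_imp_le_at_right_limit[OF lim_0 nonincreasing \<open>r > 0\<close>])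
  moreover obtain R where "R > r" and "current_functional R < current_functional r"
  proof -
    have "D r > 0"
      unfolding D_def using gap \<open>a > 0\<close> \<open>r > 0\<close> \<open>Q r \<noteq> 0\<close> by (intro mult_pos_pos) auto
    then obtain \<delta> where "\<delta> > 0"
      and "\<And>h. 0 < h \<Longrightarrow> h < \<delta> \<Longrightarrow> current_functional (r + h) < current_functional r"
      using DERIV_neg_dec_right[OF deriv[OF \<open>r > 0\<close>]] by auto
    then show ?thesis using that[of "r + \<delta> / 2"] by simp
  qed
  moreover have "t powr (d - 1) * current t \<le> current_functional R" if "t \<ge> R" for t
  proof -
    have "t powr (d - 1) * current t \<le> current_functional t"
      using \<open>a > 0\<close> by (simp add: current_functional_def)
    also have "\<dots> \<le> current_functional R"
      by (rule DERIV_nonpos_imp_nonincreasing[OF that])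
        (rule nonincreasing, use \<open>R > r\<close> \<open>r > 0\<close> in simp)
    finally show ?thesis .
  qed
  ultimately show ?thesis
    using that[of "- current_functional R" R] by simp
qed

lemma weighted_mass_eventually_small:
  assumes "\<sigma> > 0" "\<sigma> * d < 2" "a > 0" "L > 0"
    and decay: "\<forall>\<^sub>F \<rho> in at_top. cmod (Q \<rho>) \<le> C * \<rho> powr (- (1 / \<sigma>))"
  shows "\<forall>\<^sub>F \<rho> in at_top. 2 * a * \<rho> * (\<rho> powr (d - 1) * (cmod (Q \<rho>))\<^sup>2) \<le> L"
proof -
  have "d - 2 / \<sigma> < 0" using assms(1,2) by (simp add: field_simps)
  then have "((\<lambda>\<rho>. 2 * a * C\<^sup>2 * \<rho> powr (d - 2 / \<sigma>)) \<longlongrightarrow> 0) at_top"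
    by (intro tendsto_mult_right_zero tendsto_neg_powr filterlim_ident)
  from order_tendstoD(2)[OF this \<open>L > 0\<close>] decay eventually_gt_at_top[of 0]
  show ?thesis
  proof eventually_elim
    case (elim \<rho>)
    have exponent: "d - 2 / \<sigma> = 1 + (d - 1) + - (1 / \<sigma>) + - (1 / \<sigma>)"
      using \<open>\<sigma> > 0\<close> by (simp add: field_simps)
    have "(cmod (Q \<rho>))\<^sup>2 \<le> (C * \<rho> powr (- (1 / \<sigma>)))\<^sup>2"
      using elim by (intro power_mono) auto
    then have "2 * a * \<rho> * (\<rho> powr (d - 1) * (cmod (Q \<rho>))\<^sup>2)
        \<le> 2 * a * \<rho> * (\<rho> powr (d - 1) * (C * \<rho> powr (- (1 / \<sigma>)))\<^sup>2)"
      using elim \<open>a > 0\<close> by (intro mult_left_mono) auto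
    also have "\<dots> = 2 * a * C\<^sup>2 * \<rho> powr (d - 2 / \<sigma>)"
      unfolding exponent powr_add using elim by (simp add: power2_eq_square)
    finally show ?case using elim by simp
  qed
qed

lemma flux_functional_deriv_ge:
  assumes "x \<ge> 1" "a > 0" "L > 0" "\<sigma> > 0"
    and "x powr (d - 1) * current x \<le> - L"
    and "2 * a * x * (x powr (d - 1) * (cmod (Q x))\<^sup>2) \<le> L" "cmod (Q x) \<le> 1"
  shows "a * L \<le> x powr (d - 1) * ((cmod (Q' x))\<^sup>2 + (cmod (Q x))\<^sup>2
      - cmod (Q x) powr (2 * \<sigma>) * (cmod (Q x))\<^sup>2) + a * x * (x powr (d - 1) * current x)"
proof -
  have "0 < x powr (d - 1)" using \<open>x \<ge> 1\<close> by simp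
  moreover have "cmod (Q x) powr (2 * \<sigma>) \<le> 1"
    using assms(4,7) by (intro powr_le1) auto
  ultimately show ?thesis
    using flux_growth_inequality[OF _ zero_le_power2 current_sq_le assms(5,3,6) _ assms(1,2)] by blast
qed

lemma negative_current_excludes_decay:
  assumes "\<sigma> > 0" "\<sigma> * d < 2" "a > 0" "L > 0"
    and current_neg: "\<And>t. t \<ge> R \<Longrightarrow> t powr (d - 1) * current t \<le> - L"
    and decay: "\<forall>\<^sub>F \<rho> in at_top. cmod (Q \<rho>) \<le> C * \<rho> powr (- (1 / \<sigma>))"
  shows False
proof -
  have Q_to_0: "((\<lambda>\<rho>. cmod (Q \<rho>)) \<longlongrightarrow> 0) at_top"
  proof (rule Lim_null_comparison)
    show "\<forall>\<^sub>F \<rho> in at_top. norm (cmod (Q \<rho>)) \<le> C * \<rho> powr (- (1 / \<sigma>))"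
      using decay by simp
    have "- (1 / \<sigma>) < 0" using \<open>\<sigma> > 0\<close> by simp
    then show "((\<lambda>\<rho>. C * \<rho> powr (- (1 / \<sigma>))) \<longlongrightarrow> 0) at_top"
      by (intro tendsto_mult_right_zero tendsto_neg_powr filterlim_ident)
  qed
  have mass_to_0: "((\<lambda>\<rho>. (cmod (Q \<rho>))\<^sup>2) \<longlongrightarrow> 0) at_top"
    using tendsto_power[OF Q_to_0, of 2] by simp
  have "\<forall>\<^sub>F \<rho> in at_top. 2 * a * \<rho> * (\<rho> powr (d - 1) * (cmod (Q \<rho>))\<^sup>2) \<le> L
      \<and> cmod (Q \<rho>) \<le> 1 \<and> \<rho> \<ge> max R 1"
    using weighted_mass_eventually_small[OF assms(1-4) decay] order_tendstoD(2)[OF Q_to_0 zero_less_one]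
      eventually_ge_at_top[of "max R 1"]
    by eventually_elim auto
  then obtain T where T: "\<And>\<rho>. \<rho> \<ge> T \<Longrightarrow> 2 * a * \<rho> * (\<rho> powr (d - 1) * (cmod (Q \<rho>))\<^sup>2) \<le> L
      \<and> cmod (Q \<rho>) \<le> 1 \<and> \<rho> \<ge> max R 1"
    unfolding eventually_at_top_linorder by blast
  have "\<forall>\<^sub>F x in at_top. flux_functional x > 0"
  proof (rule DERIV_ge_pos_imp_eventually_pos)
    fix x assume "x \<ge> T"
    then have "x \<ge> 1" "x \<ge> R" "2 * a * x * (x powr (d - 1) * (cmod (Q x))\<^sup>2) \<le> L" "cmod (Q x) \<le> 1"
      using T by auto
    moreover from \<open>x \<ge> 1\<close> have "x > 0" by simp
    ultimately show "\<exists>y. (flux_functional has_real_derivative y) (at x) \<and> y \<ge> a * L"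
      using flux_functional_deriv flux_functional_deriv_ge current_neg assms(1,3,4) by blast
  qed (use assms(3,4) in simp)
  with eventually_ge_at_top[of "max R 1"]
  have "\<forall>\<^sub>F x in at_top. mass_flux x > 0 \<and> x \<ge> max R 1"
    by eventually_elim (auto simp: flux_functional_def zero_less_mult_iff)
  then obtain T' where flux_pos: "\<And>x. x \<ge> T' \<Longrightarrow> mass_flux x > 0 \<and> x \<ge> max R 1"
    unfolding eventually_at_top_linorder by blast
  have "(cmod (Q T'))\<^sup>2 \<le> 0"
  proof (rule DERIV_nonneg_imp_le_at_top_limit[OF mass_to_0 _ order.refl])
    fix x assume "x \<ge> T'"
    then show "\<exists>y. ((\<lambda>t. (cmod (Q t))\<^sup>2) has_real_derivative y) (at x) \<and> y \<ge> 0"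
      using mass_deriv[of x] flux_pos[of x] by (intro exI conjI) auto
  qed
  then have "current T' = 0" by (simp add: current_def)
  then show False using current_neg[of T'] flux_pos[of T'] \<open>L > 0\<close> by simp
qed

end

theorem lemma5:
  fixes d \<sigma> a :: real and Q Q' Q'' :: "real \<Rightarrow> complex"
  assumes hd: "d \<ge> 1" and hsig: "\<sigma> > 0" and hlow: "1 < \<sigma> * d" and hup: "\<sigma> * d < 2"
    and ha: "a > 0"
    and dQ: "\<And>r. r \<ge> 0 \<Longrightarrow> (Q has_vector_derivative Q' r) (at r within {0..})"
    and cQ': "continuous_on {0..} Q'"
    and dQ': "\<And>r. r > 0 \<Longrightarrow> (Q' has_vector_derivative Q'' r) (at r)"
    and ode: "\<And>r. r > 0 \<Longrightarrow>
        Q'' r + of_real ((d - 1) / r) * Q' r - Q r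
        + \<i> * of_real a * (of_real (1 / \<sigma>) * Q r + of_real r * Q' r)
        + of_real (cmod (Q r) powr (2 * \<sigma>)) * Q r = 0"
    and bc: "Q' 0 = 0"
    and nontriv: "\<exists>r\<ge>0. Q r \<noteq> 0"
  shows "\<not> (\<exists>c1::complex.
           ((\<lambda>\<rho>. \<rho> powr (1 / \<sigma>) *\<^sub>R
               (Q \<rho> - c1 * (complex_of_real \<rho>) powr (- \<i> / complex_of_real a - complex_of_real (1 / \<sigma>))))
             \<longlongrightarrow> 0) at_top)"
proof -
  have "(Q has_vector_derivative Q' r) (at r)" if "r > 0" for r
    using dQ[of r] that at_within_interior[of r "{0..}"] by simp
  then interpret radial_profile_ode d \<sigma> a Q Q' Q''
    using dQ' ode by unfold_locales
  have Q_0: "(Q \<longlongrightarrow> Q 0) (at_right 0)"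
    using has_vector_derivative_continuous[OF dQ[of 0]]
    by (auto simp: continuous_within intro: tendsto_within_subset)
  have "(Q' \<longlongrightarrow> Q' 0) (at 0 within {0..})"
    using cQ' by (simp add: continuous_on_def)
  then have "(Q' \<longlongrightarrow> 0) (at_right 0)"
    using bc by (auto intro: tendsto_within_subset)
  then have "(current_functional \<longlongrightarrow> 0) (at_right 0)"
    using current_functional_tendsto_0[OF hd Q_0] by blast
  moreover obtain r where "r > 0" "Q r \<noteq> 0"
    using nontriv exists_pos_nonzero_of_tendsto_at_right_0[OF _ _ Q_0] by blast
  ultimately obtain L R where "L > 0" "\<And>t. t \<ge> R \<Longrightarrow> t powr (d - 1) * current t \<le> - L"
    using weighted_current_eventually_negative[OF hsig hup ha] by metis
  then have "\<not> (\<forall>\<^sub>F \<rho> in at_top. cmod (Q \<rho>) \<le> C * \<rho> powr (- (1 / \<sigma>)))" for C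
    using negative_current_excludes_decay[OF hsig hup ha] by blast
  then show ?thesis
    by (auto dest!: norm_le_of_powr_asymptotics[rotated])
qed

end
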